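(* Let $X$ and $Y$ be jointly spacelike slices (i.e. $X\cup Y$ is spacelike). Then the presheaf $(X\wedge Y)(-):\mathsf{Slice}^{op}\to\mathsf{Set}$ is representable (namely by the slice $X\cap Y$).
   Context: Fix a connected, time-orientable Lorentzian manifold $\mathcal{M}$ with a fixed time-orientation (no further causality assumptions). A causal curve is an equivalence class, up to monotone reparametrisation, of smooth regular paths $\mu:\iota\to\mathcal{M}$ ($\iota\subseteq\mathbb{R}$ an interval) whose tangent is everywhere timelike or null; it is future-directed if the tangent is everywhere future-directed. Write $x\prec y$ if $x=y$ or there is a future-directed causal curve from $x$ to $y$. A region $A\subseteq\mathcal{M}$ is spacelike if no two distinct points $x,y\in A$ satisfy $x\prec y$. A slice is a closed spacelike subset of $\mathcal{M}$; slices $X,Y$ are jointly spacelike if $X\cup Y$ is spacelike. For regions $A,B$, $\mathcal{C}[A,B]$ is the set of future-directed causal curves passing through $A$ and then $B$: for a representative path $\mu:\iota\to\mathcal{M}$, there exists $q\in\iota$ with $\mu(q)\in B$, and for every such $q$ there exists $p\le q$ with $\mu(p)\in A$. The category $\mathsf{Slice}$ has slices as objects, $\mathsf{Slice}(X,Y)=\mathcal{P}(\mathcal{C}[X,Y])$ (the powerset), composition $T\circ S:=T\cap S$, identities $1_X=\mathcal{C}[X,X]$. For slices $X,Y$, $(X\wedge Y)(-)$ is the presheaf with $(X\wedge Y)(Z):=\mathcal{P}(\mathcal{C}[Z,X]\cap\mathcal{C}[Z,Y])$ and $(X\wedge Y)(U:Z'\to Z):C\mapsto C\cap U$. *)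

theory Defs
  imports "HOL-Analysis.Analysis"
begin

text \<open>
  The manifold is represented by a topological space of points of type 'm, and
  its causal structure by the parameter FD: the set of (representatives of)
  future-directed causal paths, each given as a pair (iota, mu) of a real
  interval iota and a map mu that is only relevant on iota.
\<close>

type_synonym 'm path = "real set \<times> (real \<Rightarrow> 'm)"

definition reparam :: "'m path \<Rightarrow> 'm path \<Rightarrow> bool" where
  "reparam P Q \<longleftrightarrow> (\<exists>f. strict_mono_on (fst Q) f \<and> f ` fst Q = fst P
                          \<and> (\<forall>t\<in>fst Q. snd Q t = snd P (f t)))"

definition curve_class :: "'m path \<Rightarrow> 'm path set" where
  "curve_class P = {Q. reparam P Q}"

definition fd_curves :: "'m path set \<Rightarrow> 'm path set set" where
  "fd_curves FD = {curve_class P | P. P \<in> FD \<and> is_interval (fst P)}"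

definition cprec :: "'m path set \<Rightarrow> 'm \<Rightarrow> 'm \<Rightarrow> bool" where
  "cprec FD x y \<longleftrightarrow> x = y \<or>
     (\<exists>P\<in>FD. is_interval (fst P) \<and>
        (\<exists>p\<in>fst P. \<exists>q\<in>fst P. p \<le> q \<and> snd P p = x \<and> snd P q = y))"

definition spacelike :: "'m path set \<Rightarrow> 'm set \<Rightarrow> bool" where
  "spacelike FD A \<longleftrightarrow> (\<forall>x\<in>A. \<forall>y\<in>A. x \<noteq> y \<longrightarrow> \<not> cprec FD x y)"

definition slice :: "'m path set \<Rightarrow> 'm::topological_space set \<Rightarrow> bool" where
  "slice FD X \<longleftrightarrow> closed X \<and> spacelike FD X"

definition path_through :: "'m set \<Rightarrow> 'm set \<Rightarrow> 'm path \<Rightarrow> bool" where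
  "path_through A B P \<longleftrightarrow>
     (\<exists>q\<in>fst P. snd P q \<in> B) \<and>
     (\<forall>q\<in>fst P. snd P q \<in> B \<longrightarrow> (\<exists>p\<in>fst P. p \<le> q \<and> snd P p \<in> A))"

definition CC :: "'m path set \<Rightarrow> 'm set \<Rightarrow> 'm set \<Rightarrow> 'm path set set" where
  "CC FD A B = {c \<in> fd_curves FD. \<exists>P\<in>c. path_through A B P}"

definition slice_hom :: "'m path set \<Rightarrow> 'm set \<Rightarrow> 'm set \<Rightarrow> 'm path set set set" where
  "slice_hom FD X Y = Pow (CC FD X Y)"

definition slice_comp :: "'m path set set \<Rightarrow> 'm path set set \<Rightarrow> 'm path set set" where
  "slice_comp T S = T \<inter> S"

definition wedge_obj :: "'m path set \<Rightarrow> 'm set \<Rightarrow> 'm set \<Rightarrow> 'm set \<Rightarrow> 'm path set set set" where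
  "wedge_obj FD X Y Z = Pow (CC FD Z X \<inter> CC FD Z Y)"

definition wedge_map :: "'m path set set \<Rightarrow> 'm path set set \<Rightarrow> 'm path set set" where
  "wedge_map U C = C \<inter> U"

definition wedge_represented_by ::
  "'m path set \<Rightarrow> 'm::topological_space set \<Rightarrow> 'm set \<Rightarrow> 'm set \<Rightarrow> bool" where
  "wedge_represented_by FD X Y R \<longleftrightarrow> slice FD R \<and>
     (\<exists>phi. (\<forall>Z. slice FD Z \<longrightarrow> bij_betw (phi Z) (slice_hom FD Z R) (wedge_obj FD X Y Z)) \<and>
            (\<forall>Z Z' U S. slice FD Z \<longrightarrow> slice FD Z' \<longrightarrow> U \<in> slice_hom FD Z' Z \<longrightarrow>
                 S \<in> slice_hom FD Z R \<longrightarrow>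
                 phi Z' (slice_comp S U) = wedge_map U (phi Z S)))"

end

theory Submission
  imports Defs
begin

(* Because X \<union> Y is spacelike, a future-directed causal curve meets X \<union> Y in at
   most one point. Hence a curve passing through Z and then X, and through Z and
   then Y, meets X and Y in the same point of X \<inter> Y, so C[Z, X \<inter> Y] is exactly
   C[Z, X] \<inter> C[Z, Y]. The hom-sets Slice(Z, X \<inter> Y) and (X \<and> Y)(Z) therefore
   coincide, and the identity maps form the natural isomorphism. *)

lemma reparam_refl: "reparam P P"
  unfolding reparam_def by (rule exI[of _ id]) (auto simp: strict_mono_on_def)

lemma path_through_reparam:
  assumes "reparam P Q" and "path_through A B Q"
  shows "path_through A B P"
proof -
  obtain f where mono: "strict_mono_on (fst Q) f" and onto: "f ` fst Q = fst P"
    and eq: "\<And>t. t \<in> fst Q \<Longrightarrow> snd Q t = snd P (f t)"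
    using assms(1) unfolding reparam_def by blast
  from assms(2) obtain q where "q \<in> fst Q" "snd Q q \<in> B"
    unfolding path_through_def by blast
  then have hits_B: "\<exists>q\<in>fst P. snd P q \<in> B"
    using onto eq by (metis image_eqI)
  have "\<exists>p\<in>fst P. p \<le> q \<and> snd P p \<in> A" if "q \<in> fst P" "snd P q \<in> B" for q
  proof -
    from that(1) onto have "q \<in> f ` fst Q" by simp
    then obtain t where t: "t \<in> fst Q" "q = f t" by blast
    with eq that(2) have "snd Q t \<in> B" by simp
    then obtain s where s: "s \<in> fst Q" "s \<le> t" "snd Q s \<in> A"
      using assms(2) t(1) unfolding path_through_def by blast
    have "f s \<le> f t"
    proof (cases "s = t")
      case False
      with s(2) have "s < t" by simp
      then show ?thesis using strict_mono_onD[OF mono s(1) t(1)] by simp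
    qed simp
    moreover have "f s \<in> fst P"
      using s(1) onto by blast
    moreover have "snd P (f s) \<in> A"
      using eq[OF s(1)] s(3) by simp
    ultimately show ?thesis
      using t(2) by blast
  qed
  with hits_B show ?thesis
    unfolding path_through_def by blast
qed

lemma curve_class_mem_CC_iff:
  assumes "P \<in> FD" and "is_interval (fst P)"
  shows "curve_class P \<in> CC FD A B \<longleftrightarrow> path_through A B P"
proof
  assume "curve_class P \<in> CC FD A B"
  then obtain Q where "reparam P Q" "path_through A B Q"
    unfolding CC_def curve_class_def by blast
  then show "path_through A B P"
    by (rule path_through_reparam)
next
  assume "path_through A B P"
  moreover have "P \<in> curve_class P"
    by (simp add: curve_class_def reparam_refl)
  ultimately show "curve_class P \<in> CC FD A B"
    using assms unfolding CC_def fd_curves_def by blast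
qed

lemma cprec_along_path:
  assumes "P \<in> FD" and "is_interval (fst P)"
    and "a \<in> fst P" and "b \<in> fst P" and "a \<le> b"
  shows "cprec FD (snd P a) (snd P b)"
  unfolding cprec_def using assms by (intro disjI2 bexI[of _ P]) auto

lemma spacelike_meets_path_once:
  assumes "spacelike FD A" and "P \<in> FD" and "is_interval (fst P)"
    and "a \<in> fst P" and "b \<in> fst P" and "snd P a \<in> A" and "snd P b \<in> A"
  shows "snd P a = snd P b"
proof -
  have "cprec FD (snd P a) (snd P b) \<or> cprec FD (snd P b) (snd P a)"
  proof (cases "a \<le> b")
    case True
    then show ?thesis using cprec_along_path[OF assms(2-5)] by blast
  next
    case False
    then have "b \<le> a" by simp
    then show ?thesis using cprec_along_path[OF assms(2,3,5,4)] by blast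
  qed
  with assms(1,6,7) show ?thesis
    unfolding spacelike_def by metis
qed

lemma path_through_Int_iff:
  assumes meet_once: "\<And>a b. a \<in> fst P \<Longrightarrow> b \<in> fst P \<Longrightarrow> snd P a \<in> X \<Longrightarrow> snd P b \<in> Y
                              \<Longrightarrow> snd P a = snd P b"
  shows "path_through Z (X \<inter> Y) P \<longleftrightarrow> path_through Z X P \<and> path_through Z Y P"
proof
  assume through: "path_through Z (X \<inter> Y) P"
  then obtain q0 where q0: "q0 \<in> fst P" "snd P q0 \<in> X \<inter> Y"
    unfolding path_through_def by blast
  have "snd P q \<in> X \<inter> Y" if "q \<in> fst P" "snd P q \<in> X \<union> Y" for q
    using that q0 meet_once[of q q0] meet_once[of q0 q] by auto
  with through q0 show "path_through Z X P \<and> path_through Z Y P"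
    unfolding path_through_def by blast
next
  assume through: "path_through Z X P \<and> path_through Z Y P"
  then obtain q0 q1 where q0: "q0 \<in> fst P" "snd P q0 \<in> X" and q1: "q1 \<in> fst P" "snd P q1 \<in> Y"
    unfolding path_through_def by blast
  have "snd P q0 \<in> X \<inter> Y"
    using q0(2) q1(2) meet_once[OF q0(1) q1(1) q0(2) q1(2)] by simp
  with q0(1) have "\<exists>q\<in>fst P. snd P q \<in> X \<inter> Y"
    by blast
  moreover have "\<exists>p\<in>fst P. p \<le> q \<and> snd P p \<in> Z" if "q \<in> fst P" "snd P q \<in> X \<inter> Y" for q
    using through that unfolding path_through_def by blast
  ultimately show "path_through Z (X \<inter> Y) P"
    unfolding path_through_def by blast
qed

lemma CC_Int:
  assumes "spacelike FD (X \<union> Y)"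
  shows "CC FD Z (X \<inter> Y) = CC FD Z X \<inter> CC FD Z Y"
proof (intro set_eqI)
  fix c
  show "c \<in> CC FD Z (X \<inter> Y) \<longleftrightarrow> c \<in> CC FD Z X \<inter> CC FD Z Y"
  proof (cases "c \<in> fd_curves FD")
    case True
    then obtain P where P: "P \<in> FD" "is_interval (fst P)" and c: "c = curve_class P"
      unfolding fd_curves_def by blast
    have "path_through Z (X \<inter> Y) P \<longleftrightarrow> path_through Z X P \<and> path_through Z Y P"
      by (rule path_through_Int_iff) (rule spacelike_meets_path_once[OF assms P], auto)
    then show ?thesis
      unfolding c by (simp add: curve_class_mem_CC_iff[OF P])
  next
    case False
    then show ?thesis
      unfolding CC_def by blast
  qed
qed

lemma slice_Int:
  assumes "slice FD X" and "slice FD Y"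
  shows "slice FD (X \<inter> Y)"
  using assms unfolding slice_def spacelike_def by (simp add: closed_Int)

lemma wedge_represented_by_if_CC_eq:
  assumes "slice FD R" and "\<And>Z. CC FD Z R = CC FD Z X \<inter> CC FD Z Y"
  shows "wedge_represented_by FD X Y R"
  unfolding wedge_represented_by_def
proof (intro conjI exI[of _ "\<lambda>Z. id"] allI impI)
  show "slice FD R" by (rule assms(1))
  show "bij_betw id (slice_hom FD Z R) (wedge_obj FD X Y Z)" for Z
    by (simp add: slice_hom_def wedge_obj_def assms(2))
  show "id (slice_comp S U) = wedge_map U (id S)" for U S :: "'a path set set"
    by (simp add: slice_comp_def wedge_map_def)
qed

theorem mainTheorem8:
  fixes FD :: "('m::topological_space) path set"
    and X Y :: "'m set"
  assumes "slice FD X" and "slice FD Y" and "spacelike FD (X \<union> Y)"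
  shows "wedge_represented_by FD X Y (X \<inter> Y)"
  using slice_Int[OF assms(1,2)] CC_Int[OF assms(3)]
  by (rule wedge_represented_by_if_CC_eq)

end
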